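(* Let $(X,d_X)$ be an ultrametric space and let $Y$ be any separable metrizable space. Then a function $f: X \to Y$ is of Baire class $1$ if and only if $f$ is the pointwise limit of a sequence of full functions from $X$ to $Y$.
   Context: Work in ZF plus countable choice over the reals. A function $f:X\to Y$ between metrizable spaces is of Baire class $1$ if $f^{-1}(U)\in\mathbf{\Sigma}^0_2(X)$ for every open $U\subseteq Y$. In an ultrametric space $(X,d_X)$, a set $A\subseteq X$ is full with constant $r>0$ if for every $x\in A$ the open ball $B(x,r)=\{y\in X: d_X(x,y)<r\}$ is contained in $A$; $A$ is full if it is full with some constant $r>0$. A function $f:X\to Y$ is full if it takes only finitely many values and the preimage of each of these values is a full subset of $X$. *)

theory Defs
  imports "HOL-Analysis.Analysis"
begin

definition ultrametric_space :: "'a set \<Rightarrow> ('a \<Rightarrow> 'a \<Rightarrow> real) \<Rightarrow> bool" where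
  "ultrametric_space M d \<longleftrightarrow> Metric_space M d \<and>
     (\<forall>x\<in>M. \<forall>y\<in>M. \<forall>z\<in>M. d x z \<le> max (d x y) (d y z))"

definition baire_class_1 :: "'a topology \<Rightarrow> 'b topology \<Rightarrow> ('a \<Rightarrow> 'b) \<Rightarrow> bool" where
  "baire_class_1 X Y f \<longleftrightarrow>
     (\<forall>U. openin Y U \<longrightarrow> fsigma_in X {x \<in> topspace X. f x \<in> U})"

definition full_set_with :: "'a set \<Rightarrow> ('a \<Rightarrow> 'a \<Rightarrow> real) \<Rightarrow> real \<Rightarrow> 'a set \<Rightarrow> bool" where
  "full_set_with M d r A \<longleftrightarrow> A \<subseteq> M \<and> r > 0 \<and> (\<forall>x\<in>A. {y \<in> M. d x y < r} \<subseteq> A)"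

definition full_set :: "'a set \<Rightarrow> ('a \<Rightarrow> 'a \<Rightarrow> real) \<Rightarrow> 'a set \<Rightarrow> bool" where
  "full_set M d A \<longleftrightarrow> (\<exists>r>0. full_set_with M d r A)"

definition full_function :: "'a set \<Rightarrow> ('a \<Rightarrow> 'a \<Rightarrow> real) \<Rightarrow> 'b topology \<Rightarrow> ('a \<Rightarrow> 'b) \<Rightarrow> bool" where
  "full_function M d Y g \<longleftrightarrow> g \<in> M \<rightarrow> topspace Y \<and> finite (g ` M) \<and>
     (\<forall>y \<in> g ` M. full_set M d {x \<in> M. g x = y})"

end

theory Submission
  imports Defs
begin

text \<open>
  Full functions are locally constant, hence continuous, so their pointwise limits are of Baire
  class 1 by the classical argument of Lebesgue.  Conversely, let \<open>f\<close> be of Baire class 1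
  and fix a countable dense set in \<open>Y\<close>.  For every scale \<open>1/(k+1)\<close>, the preimages of
  the balls of that radius around the dense points are \<open>F\<^sub>\<sigma>\<close>, which yields a countable
  cover of \<open>X\<close> by closed sets \<open>F k i\<close> on which \<open>f\<close> is \<open>1/(k+1)\<close>-close to a
  point \<open>c k i\<close>.  In an ultrametric space the open \<open>r\<close>-neighbourhood of any set is a
  union of balls of radius \<open>r\<close>, so the finite set of indices \<open>(k, i)\<close> with
  \<open>k, i \<le> n\<close> whose sets are \<open>1/(n+1)\<close>-close to \<open>x\<close> is constant on balls of that radius.
  The \<open>n\<close>-th approximant reads off from this finite set the deepest scale up to which the
  first hit sets at each scale have mutually close centres, and returns the centre at that
  scale.  As \<open>n \<rightarrow> \<infinity>\<close> the sets not containing \<open>x\<close> drop out of the finite set because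
  they are closed, so the approximants converge to \<open>f x\<close>.
\<close>

lemma full_function_preimage_openin:
  assumes "Metric_space M d" "full_function M d Y g"
  shows "openin (Metric_space.mtopology M d) {x \<in> M. g x \<in> S}"
proof -
  interpret Metric_space M d by fact
  show ?thesis unfolding openin_mtopology
  proof (intro conjI allI impI)
    fix x assume x: "x \<in> {x \<in> M. g x \<in> S}"
    with assms(2) obtain r where r: "full_set_with M d r {z \<in> M. g z = g x}"
      unfolding full_function_def full_set_def by blast
    then have "mball x r \<subseteq> {x \<in> M. g x \<in> S}"
      using x unfolding full_set_with_def by fastforce
    with r show "\<exists>r>0. mball x r \<subseteq> {x \<in> M. g x \<in> S}"
      unfolding full_set_with_def by blast
  qed auto
qed

lemma full_function_continuous_map:
  assumes "Metric_space M d" "full_function M d Y g"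
  shows "continuous_map (Metric_space.mtopology M d) Y g"
proof -
  interpret Metric_space M d by fact
  show ?thesis
    using assms(2) full_function_preimage_openin[OF assms]
    unfolding continuous_map_def full_function_def by auto
qed

lemma (in Metric_space) baire_class_1_pointwise_limit_continuous:
  assumes cont: "\<And>n. continuous_map X mtopology (g n)"
    and lim: "\<And>x. x \<in> topspace X \<Longrightarrow> limitin mtopology (\<lambda>n. g n x) (f x) sequentially"
  shows "baire_class_1 X mtopology f"
  unfolding baire_class_1_def
proof (intro allI impI)
  fix U assume U: "openin mtopology U"
  define inner where "inner k = M - (\<Union>z\<in>M - U. mball z (1 / Suc k))" for k :: nat
  define A where "A k N = (\<Inter>n\<in>{N..}. {x \<in> topspace X. g n x \<in> inner k})" for k N :: nat
  have closed_A: "closedin X (A k N)" for k N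
    unfolding A_def inner_def
    by (intro closedin_INT closedin_continuous_map_preimage[OF cont] closedin_diff) auto
  have lim': "f x \<in> M \<and> (\<forall>\<epsilon>>0. \<forall>\<^sub>F n in sequentially. g n x \<in> M \<and> d (g n x) (f x) < \<epsilon>)"
    if "x \<in> topspace X" for x
    using lim[OF that] unfolding limitin_metric .
  have preimage: "{x \<in> topspace X. f x \<in> U} = (\<Union>k. \<Union>N. A k N)"
  proof (intro equalityI subsetI)
    fix x assume x: "x \<in> {x \<in> topspace X. f x \<in> U}"
    then obtain r where r: "r > 0" "mball (f x) r \<subseteq> U"
      using U unfolding openin_mtopology by blast
    obtain k where "inverse (Suc k) < r / 2"
      using reals_Archimedean r(1) by (metis half_gt_zero)
    then have k: "2 / Suc k < r" by (simp add: field_simps)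
    have "\<forall>\<^sub>F n in sequentially. g n x \<in> M \<and> d (g n x) (f x) < 1 / Suc k"
      using lim' x by simp
    then obtain N where N: "\<And>n. n \<ge> N \<Longrightarrow> g n x \<in> M \<and> d (g n x) (f x) < 1 / Suc k"
      unfolding eventually_sequentially by blast
    have "g n x \<in> inner k" if "n \<ge> N" for n
    proof -
      have "g n x \<notin> mball z (1 / Suc k)" if z: "z \<in> M - U" for z
      proof -
        have fx: "f x \<in> M" using lim' x by blast
        then have "r \<le> d (f x) z" using r z by (meson DiffE in_mball not_le subsetD)
        also have "\<dots> \<le> d (f x) (g n x) + d (g n x) z"
          using fx z N[OF \<open>n \<ge> N\<close>] triangle by blast
        finally show ?thesis
          using N[OF \<open>n \<ge> N\<close>] k commute[of z] commute[of "f x"] by simp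
      qed
      then show ?thesis unfolding inner_def using N[OF that] by blast
    qed
    then show "x \<in> (\<Union>k. \<Union>N. A k N)" using x unfolding A_def by blast
  next
    fix x assume "x \<in> (\<Union>k. \<Union>N. A k N)"
    then obtain k N where x: "x \<in> topspace X" and inner: "\<And>n. n \<ge> N \<Longrightarrow> g n x \<in> inner k"
      unfolding A_def by blast
    have "\<forall>\<^sub>F n in sequentially. g n x \<in> M \<and> d (g n x) (f x) < 1 / Suc k"
      using lim' x by simp
    then have "\<forall>\<^sub>F n in sequentially. n \<ge> N \<and> d (g n x) (f x) < 1 / Suc k"
      using eventually_ge_at_top[of N] by eventually_elim simp
    then obtain n where n: "n \<ge> N" "d (g n x) (f x) < 1 / Suc k"
      using eventually_happens' by force
    have "g n x \<in> M" "g n x \<notin> (\<Union>z\<in>M - U. mball z (1 / Suc k))"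
      using inner[OF n(1)] unfolding inner_def by auto
    moreover have "f x \<in> M" using lim' x by blast
    ultimately have "f x \<in> U" using n(2) by (auto simp: commute)
    with x show "x \<in> {x \<in> topspace X. f x \<in> U}" by simp
  qed
  have "fsigma_in X (\<Union>N. A k N)" for k
    by (rule fsigma_in_Union) (auto intro: closed_imp_fsigma_in closed_A)
  then show "fsigma_in X {x \<in> topspace X. f x \<in> U}"
    unfolding preimage by (intro fsigma_in_Union) auto
qed

lemma (in Metric_space) baire_class_1_countable_closed_cover:
  assumes baire: "baire_class_1 X mtopology f" and sep: "separable_space mtopology"
    and f_maps: "f \<in> topspace X \<rightarrow> M" and ne: "topspace X \<noteq> {}" and "\<epsilon> > 0"
  obtains F :: "nat \<Rightarrow> 'b set" and c :: "nat \<Rightarrow> 'a"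
  where "\<And>i. closedin X (F i)" "\<And>x. x \<in> topspace X \<Longrightarrow> \<exists>i. x \<in> F i"
    "\<And>i. c i \<in> M" "\<And>i x. x \<in> F i \<Longrightarrow> d (c i) (f x) < \<epsilon>"
proof -
  obtain C where C: "countable C" "C \<subseteq> M" "mtopology closure_of C = M"
    using sep unfolding separable_space_def by auto
  have dense: "\<exists>y\<in>C. d (f x) y < \<epsilon>" if "x \<in> topspace X" for x
  proof -
    have "f x \<in> mtopology closure_of C" using f_maps that C(3) by auto
    then obtain y where "y \<in> C" "y \<in> mball (f x) \<epsilon>"
      using \<open>\<epsilon> > 0\<close> unfolding metric_closure_of by blast
    then show ?thesis by auto
  qed
  then have "C \<noteq> {}" using ne by blast
  define e where "e = from_nat_into C"
  have "\<forall>j. \<exists>G :: nat \<Rightarrow> 'b set.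
          (\<forall>i. closedin X (G i)) \<and> \<Union>(range G) = {x \<in> topspace X. f x \<in> mball (e j) \<epsilon>}"
  proof
    fix j
    have "fsigma_in X {x \<in> topspace X. f x \<in> mball (e j) \<epsilon>}"
      using baire openin_mball unfolding baire_class_1_def by blast
    then show "\<exists>G :: nat \<Rightarrow> 'b set.
        (\<forall>i. closedin X (G i)) \<and> \<Union>(range G) = {x \<in> topspace X. f x \<in> mball (e j) \<epsilon>}"
      unfolding fsigma_in_ascending by blast
  qed
  then obtain G :: "nat \<Rightarrow> nat \<Rightarrow> 'b set" where G: "\<And>j i. closedin X (G j i)"
    "\<And>j. \<Union>(range (G j)) = {x \<in> topspace X. f x \<in> mball (e j) \<epsilon>}"
    by (metis choice)
  define F where "F n = (case prod_decode n of (j, i) \<Rightarrow> G j i)" for n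
  define c where "c n = e (fst (prod_decode n))" for n
  show thesis
  proof
    show "closedin X (F n)" for n unfolding F_def by (simp add: G(1) split: prod.split)
    show "\<exists>n. x \<in> F n" if x: "x \<in> topspace X" for x
    proof -
      obtain y where "y \<in> C" "d (f x) y < \<epsilon>" using dense[OF x] by blast
      then obtain j where "e j = y" unfolding e_def by (metis C(1) from_nat_into_surj)
      then have "x \<in> \<Union>(range (G j))"
        using G(2)[of j] x f_maps C(2) \<open>y \<in> C\<close> \<open>d (f x) y < \<epsilon>\<close> commute[of "f x" y] by auto
      then obtain i where "x \<in> G j i" by blast
      then have "x \<in> F (prod_encode (j, i))" unfolding F_def by simp
      then show ?thesis ..
    qed
    show "c n \<in> M" for n unfolding c_def e_def using C(2) from_nat_into[OF \<open>C \<noteq> {}\<close>] by blast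
    show "d (c n) (f x) < \<epsilon>" if x: "x \<in> F n" for n x
    proof -
      obtain j i where n: "prod_decode n = (j, i)" by (cases "prod_decode n") blast
      then have "x \<in> \<Union>(range (G j))" using x unfolding F_def by auto
      then show ?thesis using G(2)[of j] n unfolding c_def by auto
    qed
  qed
qed

definition mnbhd :: "'a set \<Rightarrow> ('a \<Rightarrow> 'a \<Rightarrow> real) \<Rightarrow> real \<Rightarrow> 'a set \<Rightarrow> 'a set" where
  "mnbhd M d r F = {x \<in> M. \<exists>z\<in>F. d x z < r}"

lemma ultrametric_mnbhd_iff:
  assumes "ultrametric_space M d" "F \<subseteq> M" "x \<in> M" "y \<in> M" "d x y < r"
  shows "y \<in> mnbhd M d r F \<longleftrightarrow> x \<in> mnbhd M d r F"
proof -
  interpret Metric_space M d using assms(1) unfolding ultrametric_space_def by blast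
  have "v \<in> mnbhd M d r F" if uv: "u \<in> mnbhd M d r F" "u \<in> M" "v \<in> M" "d u v < r" for u v
  proof -
    obtain z where z: "z \<in> F" "d u z < r" using uv(1) unfolding mnbhd_def by blast
    have "d v z \<le> max (d v u) (d u z)"
      using assms(1,2) uv z unfolding ultrametric_space_def by blast
    then have "d v z < r" using uv(4) z(2) commute[of v u] by linarith
    then show ?thesis using uv(3) z(1) unfolding mnbhd_def by blast
  qed
  from this[of x y] this[of y x] show ?thesis using assms(3-5) commute[of y x] by auto
qed

lemma (in Metric_space) eventually_notin_mnbhd:
  assumes "closedin mtopology F" "x \<in> M - F"
  shows "\<forall>\<^sub>F n in sequentially. x \<notin> mnbhd M d (1 / Suc n) F"
proof -
  obtain r where r: "r > 0" "disjnt F (mball x r)"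
    using assms unfolding closedin_metric by blast
  obtain N where N: "inverse (Suc N) < r" using reals_Archimedean r(1) by blast
  show ?thesis unfolding eventually_sequentially
  proof (intro exI[of _ N] allI impI notI)
    fix n assume "n \<ge> N" "x \<in> mnbhd M d (1 / Suc n) F"
    then obtain z where z: "z \<in> F" "d x z < 1 / Suc n" unfolding mnbhd_def by blast
    have "1 / Suc n \<le> inverse (Suc N)"
      using \<open>n \<ge> N\<close> by (simp add: inverse_eq_divide frac_le)
    then have "z \<in> mball x r"
      using z N assms closedin_subset[OF assms(1)] by auto
    with r(2) z(1) show False by (auto simp: disjnt_iff)
  qed
qed

lemma full_functionI_factor:
  assumes "g \<in> M \<rightarrow> topspace Y" "finite T" "r > 0"
    and "\<And>x. x \<in> M \<Longrightarrow> g x = \<phi> (E x)" "\<And>x. x \<in> M \<Longrightarrow> E x \<subseteq> T"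
    and "\<And>x y. x \<in> M \<Longrightarrow> y \<in> M \<Longrightarrow> d x y < r \<Longrightarrow> E y = E x"
  shows "full_function M d Y g"
  unfolding full_function_def full_set_def full_set_with_def
proof (intro conjI ballI)
  have "g ` M \<subseteq> \<phi> ` Pow T" using assms(4,5) by auto
  then show "finite (g ` M)" using assms(2) by (simp add: finite_subset)
  show "\<exists>r>0. {x \<in> M. g x = v} \<subseteq> M \<and> 0 < r \<and>
         (\<forall>x\<in>{x \<in> M. g x = v}. {y \<in> M. d x y < r} \<subseteq> {x \<in> M. g x = v})" for v
    using assms(3,4,6) by (intro exI[of _ r]) auto
qed fact

definition first_index :: "(nat \<times> nat) set \<Rightarrow> nat \<Rightarrow> nat" where
  "first_index S k = (LEAST i. (k, i) \<in> S)"

locale closed_approximations =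
  X: Metric_space M d + Y: Metric_space T m
  for M :: "'a set" and d and T :: "'b set" and m +
  fixes f :: "'a \<Rightarrow> 'b" and F :: "nat \<Rightarrow> nat \<Rightarrow> 'a set" and c :: "nat \<Rightarrow> nat \<Rightarrow> 'b"
  assumes ultrametric: "ultrametric_space M d"
    and closedin_F: "\<And>k i. closedin X.mtopology (F k i)"
    and F_cover: "\<And>k x. x \<in> M \<Longrightarrow> \<exists>i. x \<in> F k i"
    and c_approx: "\<And>k i x. x \<in> F k i \<Longrightarrow> m (c k i) (f x) < 1 / Suc k"
    and c_in: "\<And>k i. c k i \<in> T"
    and f_in: "\<And>x. x \<in> M \<Longrightarrow> f x \<in> T"
begin

definition hits :: "nat \<Rightarrow> 'a \<Rightarrow> (nat \<times> nat) set" where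
  "hits n x = {(k, i). k \<le> n \<and> i \<le> n \<and> x \<in> mnbhd M d (1 / Suc n) (F k i)}"

text \<open>The existence clause makes \<open>first_index S j\<close> meaningful: \<open>LEAST\<close> over an empty
  row of \<open>S\<close> is unspecified.\<close>
definition consistent :: "(nat \<times> nat) set \<Rightarrow> nat \<Rightarrow> bool" where
  "consistent S k \<longleftrightarrow>
     (\<forall>j\<le>k. (\<exists>i. (j, i) \<in> S) \<and> m (c j (first_index S j)) (c k (first_index S k)) \<le> 2 / Suc j)"

text \<open>If no scale \<open>k \<le> n\<close> is consistent, \<open>GREATEST\<close> returns an unspecified scale; the
  value is still some centre, and this case does not occur for large \<open>n\<close>.\<close>
definition select :: "nat \<Rightarrow> (nat \<times> nat) set \<Rightarrow> 'b" where
  "select n S = (let K = GREATEST k. k \<le> n \<and> consistent S k in c K (first_index S K))"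

definition approximant :: "nat \<Rightarrow> 'a \<Rightarrow> 'b" where
  "approximant n x = select n (hits n x)"

lemma hits_eq:
  assumes "x \<in> M" "y \<in> M" "d x y < 1 / Suc n"
  shows "hits n y = hits n x"
  using ultrametric_mnbhd_iff[OF ultrametric _ assms] closedin_subset[OF closedin_F]
  unfolding hits_def by auto

lemma approximant_in: "approximant n x \<in> T"
  unfolding approximant_def select_def by (simp add: c_in Let_def)

lemma full_function_approximant: "full_function M d Y.mtopology (approximant n)"
proof (rule full_functionI_factor[where E = "hits n" and \<phi> = "select n"])
  show "approximant n \<in> M \<rightarrow> topspace Y.mtopology" by (simp add: approximant_in)
  show "hits n x \<subseteq> {..n} \<times> {..n}" for x unfolding hits_def by auto
  show "hits n y = hits n x" if "x \<in> M" "y \<in> M" "d x y < 1 / Suc n" for x y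
    using that by (rule hits_eq)
qed (simp_all add: approximant_def)

lemma select_near:
  assumes "K \<le> n" "consistent S K"
  shows "m (select n S) (c K (first_index S K)) \<le> 2 / Suc K"
proof -
  define G where "G = (GREATEST k. k \<le> n \<and> consistent S k)"
  have "G \<le> n \<and> consistent S G"
    unfolding G_def by (rule GreatestI_nat[of _ K n]) (use assms in auto)
  moreover have "K \<le> G"
    unfolding G_def by (rule Greatest_le_nat[of _ K n]) (use assms in auto)
  ultimately have "m (c K (first_index S K)) (c G (first_index S G)) \<le> 2 / Suc K"
    unfolding consistent_def by blast
  then show ?thesis unfolding select_def G_def[symmetric] Let_def using Y.commute by simp
qed

lemma consistentI:
  assumes "x \<in> M" "\<And>j. j \<le> K \<Longrightarrow> \<exists>i. (j, i) \<in> S" "\<And>j. j \<le> K \<Longrightarrow> x \<in> F j (first_index S j)"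
  shows "consistent S K"
  unfolding consistent_def
proof (intro allI impI conjI)
  fix j assume j: "j \<le> K"
  show "\<exists>i. (j, i) \<in> S" using assms(2) j .
  have "m (c j (first_index S j)) (c K (first_index S K))
      \<le> m (c j (first_index S j)) (f x) + m (f x) (c K (first_index S K))"
    using Y.triangle c_in f_in[OF assms(1)] by blast
  also have "\<dots> < 1 / Suc j + 1 / Suc K"
    using c_approx[OF assms(3)[OF j]] c_approx[OF assms(3)[OF order_refl]] Y.commute
    by (intro add_strict_mono) auto
  also have "\<dots> \<le> 1 / Suc j + 1 / Suc j"
    using j by (intro add_left_mono divide_left_mono) auto
  finally show "m (c j (first_index S j)) (c K (first_index S K)) \<le> 2 / Suc j" by simp
qed

lemma eventually_hits_iff:
  assumes "x \<in> M"
  shows "\<forall>\<^sub>F n in sequentially. \<forall>j\<le>K. \<forall>i\<le>B. (j, i) \<in> hits n x \<longleftrightarrow> x \<in> F j i"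
proof -
  have "\<forall>\<^sub>F n in sequentially. (j, i) \<in> hits n x \<longleftrightarrow> x \<in> F j i" for j i
  proof (cases "x \<in> F j i")
    case True
    then have "x \<in> mnbhd M d r (F j i)" if "r > 0" for r
      using assms that unfolding mnbhd_def by force
    then show ?thesis
      using True unfolding hits_def eventually_sequentially by (intro exI[of _ "max j i"]) auto
  next
    case False
    then have "\<forall>\<^sub>F n in sequentially. x \<notin> mnbhd M d (1 / Suc n) (F j i)"
      using X.eventually_notin_mnbhd[OF closedin_F] assms by blast
    then show ?thesis by eventually_elim (use False in \<open>simp add: hits_def\<close>)
  qed
  then have "\<forall>\<^sub>F n in sequentially. \<forall>p\<in>{..K} \<times> {..B}. p \<in> hits n x \<longleftrightarrow> x \<in> F (fst p) (snd p)"
    by (intro eventually_ball_finite) auto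
  then show ?thesis by eventually_elim auto
qed

lemma limitin_approximant:
  assumes x: "x \<in> M"
  shows "limitin Y.mtopology (\<lambda>n. approximant n x) (f x) sequentially"
  unfolding Y.limitin_metric
proof (intro conjI allI impI)
  show "f x \<in> T" using f_in x .
  fix \<epsilon> :: real assume "\<epsilon> > 0"
  then obtain K where "inverse (Suc K) < \<epsilon> / 3" using reals_Archimedean[of "\<epsilon> / 3"] by auto
  then have K: "3 / Suc K < \<epsilon>" by (simp add: field_simps)
  define a where "a j = (LEAST i. x \<in> F j i)" for j
  have a: "x \<in> F j (a j)" for j unfolding a_def using F_cover[OF x] by (rule LeastI_ex)
  have below_a: "x \<notin> F j i" if "i < a j" for j i using that unfolding a_def by (rule not_less_Least)
  define B where "B = Max (a ` {..K})"
  have a_le_B: "a j \<le> B" if "j \<le> K" for j unfolding B_def using that by auto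
  have "\<forall>\<^sub>F n in sequentially. max K B \<le> n \<and> (\<forall>j\<le>K. \<forall>i\<le>B. (j, i) \<in> hits n x \<longleftrightarrow> x \<in> F j i)"
    using eventually_ge_at_top eventually_hits_iff[OF x] by (rule eventually_conj)
  then show "\<forall>\<^sub>F n in sequentially. approximant n x \<in> T \<and> m (approximant n x) (f x) < \<epsilon>"
  proof eventually_elim
    case (elim n)
    have hit: "(j, a j) \<in> hits n x" if "j \<le> K" for j
      using elim that a a_le_B[OF that] by blast
    have first: "first_index (hits n x) j = a j" if "j \<le> K" for j
      unfolding first_index_def
    proof (rule Least_equality)
      show "(j, a j) \<in> hits n x" using hit[OF that] .
      show "a j \<le> i" if "(j, i) \<in> hits n x" for i
        using that elim \<open>j \<le> K\<close> below_a[of i j] a_le_B[OF \<open>j \<le> K\<close>] by (meson le_trans not_le order_less_imp_le)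
    qed
    have "consistent (hits n x) K"
      using x hit first a by (intro consistentI) auto
    then have "m (approximant n x) (c K (a K)) \<le> 2 / Suc K"
      using select_near[of K n "hits n x"] elim first[of K] unfolding approximant_def by simp
    moreover have "m (c K (a K)) (f x) < 1 / Suc K" using c_approx[OF a] .
    moreover have "m (approximant n x) (f x) \<le> m (approximant n x) (c K (a K)) + m (c K (a K)) (f x)"
      using Y.triangle approximant_in c_in f_in[OF x] by blast
    ultimately have "m (approximant n x) (f x) < 3 / Suc K" by simp
    with K approximant_in show ?case by simp
  qed
qed

end

lemma ultrametric_baire_class_1_imp_limit_of_full_functions:
  fixes M :: "'a set" and T :: "'b set" and f :: "'a \<Rightarrow> 'b"
  assumes ultrametric: "ultrametric_space M d" and Y: "Metric_space T m"
    and sep: "separable_space (Metric_space.mtopology T m)" and f_maps: "f \<in> M \<rightarrow> T"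
    and baire: "baire_class_1 (Metric_space.mtopology M d) (Metric_space.mtopology T m) f"
  obtains g where "\<And>n. full_function M d (Metric_space.mtopology T m) (g n)"
    and "\<And>x. x \<in> M \<Longrightarrow> limitin (Metric_space.mtopology T m) (\<lambda>n. g n x) (f x) sequentially"
proof (cases "M = {}")
  case True
  then show thesis using that unfolding full_function_def by simp
next
  case False
  interpret X: Metric_space M d using ultrametric unfolding ultrametric_space_def by blast
  interpret Y: Metric_space T m by fact
  have "\<exists>(F :: nat \<Rightarrow> 'a set) (c :: nat \<Rightarrow> 'b).
          (\<forall>i. closedin X.mtopology (F i)) \<and> (\<forall>x\<in>M. \<exists>i. x \<in> F i) \<and>
          (\<forall>i. c i \<in> T) \<and> (\<forall>i x. x \<in> F i \<longrightarrow> m (c i) (f x) < 1 / Suc k)" for k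
  proof -
    have "f \<in> topspace X.mtopology \<rightarrow> T" "topspace X.mtopology \<noteq> {}" "(0::real) < 1 / Suc k"
      using f_maps False by auto
    then obtain F :: "nat \<Rightarrow> 'a set" and c :: "nat \<Rightarrow> 'b"
      where "\<And>i. closedin X.mtopology (F i)" "\<And>x. x \<in> topspace X.mtopology \<Longrightarrow> \<exists>i. x \<in> F i"
      "\<And>i. c i \<in> T" "\<And>i x. x \<in> F i \<Longrightarrow> m (c i) (f x) < 1 / Suc k"
      by (rule Y.baire_class_1_countable_closed_cover[OF baire sep]) blast
    then show ?thesis by (intro exI[of _ F] exI[of _ c]) auto
  qed
  then obtain F :: "nat \<Rightarrow> nat \<Rightarrow> 'a set" and c :: "nat \<Rightarrow> nat \<Rightarrow> 'b"
    where "\<forall>k. (\<forall>i. closedin X.mtopology (F k i)) \<and> (\<forall>x\<in>M. \<exists>i. x \<in> F k i) \<and>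
      (\<forall>i. c k i \<in> T) \<and> (\<forall>i x. x \<in> F k i \<longrightarrow> m (c k i) (f x) < 1 / Suc k)"
    by metis
  then interpret closed_approximations M d T m f F c
    using ultrametric f_maps by unfold_locales auto
  show thesis using that full_function_approximant limitin_approximant .
qed

theorem mainTheorem1:
  fixes M :: "'a set" and d :: "'a \<Rightarrow> 'a \<Rightarrow> real"
    and Y :: "'b topology" and f :: "'a \<Rightarrow> 'b"
  assumes "ultrametric_space M d"
    and "metrizable_space Y" and "separable_space Y"
    and "f \<in> M \<rightarrow> topspace Y"
  shows "baire_class_1 (Metric_space.mtopology M d) Y f \<longleftrightarrow>
    (\<exists>g :: nat \<Rightarrow> 'a \<Rightarrow> 'b. (\<forall>n. full_function M d Y (g n)) \<and>
       (\<forall>x\<in>M. limitin Y (\<lambda>n. g n x) (f x) sequentially))"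
proof -
  have X: "Metric_space M d" using assms(1) unfolding ultrametric_space_def by blast
  obtain T m where Y: "Metric_space T m" and Y_eq: "Y = Metric_space.mtopology T m"
    using assms(2) unfolding metrizable_space_def by blast
  interpret Y: Metric_space T m by fact
  show ?thesis
  proof
    assume "baire_class_1 (Metric_space.mtopology M d) Y f"
    then obtain g :: "nat \<Rightarrow> 'a \<Rightarrow> 'b" where "\<And>n. full_function M d Y (g n)"
      "\<And>x. x \<in> M \<Longrightarrow> limitin Y (\<lambda>n. g n x) (f x) sequentially"
      using ultrametric_baire_class_1_imp_limit_of_full_functions[OF assms(1) Y] assms(3,4)
      unfolding Y_eq by auto
    then show "\<exists>g. (\<forall>n. full_function M d Y (g n)) \<and> (\<forall>x\<in>M. limitin Y (\<lambda>n. g n x) (f x) sequentially)"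
      by blast
  next
    assume "\<exists>g. (\<forall>n. full_function M d Y (g n)) \<and> (\<forall>x\<in>M. limitin Y (\<lambda>n. g n x) (f x) sequentially)"
    then obtain g :: "nat \<Rightarrow> 'a \<Rightarrow> 'b" where "\<And>n. full_function M d Y (g n)"
      "\<And>x. x \<in> M \<Longrightarrow> limitin Y (\<lambda>n. g n x) (f x) sequentially"
      by blast
    then show "baire_class_1 (Metric_space.mtopology M d) Y f"
      unfolding Y_eq using full_function_continuous_map[OF X] Metric_space.topspace_mtopology[OF X]
      by (intro Y.baire_class_1_pointwise_limit_continuous[of _ g]) auto
  qed
qed

end
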